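(* For every $\varphi\in B(H_1\otimes\dots\otimes H_n)$ and every $\zeta\in\Gamma(H_1,\dots,H_n)$ we have $\|S_\varphi(\zeta)\|_{op}\le\|\varphi\|\,\|\zeta\|_{2,\wedge}$.
   Context: Inner products are linear in the first variable. For a Hilbert space $K$, $K^d$ is its dual Hilbert space and $x\mapsto x^d$, $x^d(y)=(y,x)$, the canonical anti-linear isometry $K\to K^d$. For Hilbert spaces $H_1,\dots,H_n$ ($n\ge2$) let $H=H_1\otimes\dots\otimes H_n$; we identify $H_i^d\otimes H_{i+1}^d$ with $(H_i\otimes H_{i+1})^d$, so its elements are $\eta^d$ with $\eta\in H_i\otimes H_{i+1}$. If $n$ is even, $\Gamma(H_1,\dots,H_n)=(H_1\otimes H_2)\odot(H_2^d\otimes H_3^d)\odot(H_3\otimes H_4)\odot\dots\odot(H_{n-1}\otimes H_n)$; if $n$ is odd, $\Gamma(H_1,\dots,H_n)=(H_1^d\otimes H_2^d)\odot(H_2\otimes H_3)\odot(H_3^d\otimes H_4^d)\odot\dots\odot(H_{n-1}\otimes H_n)$ (algebraic tensor products). For $\varphi\in B(H)$, $S_\varphi$ is the linear map on $\Gamma$ defined on elementary tensors as follows (vectors in inner products regarded in $H$ after reordering tensor factors): if $n$ is even and $\zeta=\xi_{1,2}\otimes\eta_{2,3}^d\otimes\xi_{3,4}\otimes\dots\otimes\eta^d_{n-2,n-1}\otimes\xi_{n-1,n}$, then $S_\varphi(\zeta)\in B(H_1^d,H_n)$ with $(S_\varphi(\zeta)x^d,y)=(\varphi(\xi_{1,2}\otimes\xi_{3,4}\otimes\dots\otimes\xi_{n-1,n}),\,x\otimes\eta_{2,3}\otimes\dots\otimes\eta_{n-2,n-1}\otimes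 y)$ for $x\in H_1$, $y\in H_n$; if $n$ is odd and $\zeta=\eta_{1,2}^d\otimes\xi_{2,3}\otimes\eta_{3,4}^d\otimes\dots\otimes\xi_{n-1,n}$, then $S_\varphi(\zeta)\in B(H_1,H_n)$ with $(S_\varphi(\zeta)x,y)=(\varphi(x\otimes\xi_{2,3}\otimes\dots\otimes\xi_{n-1,n}),\,\eta_{1,2}\otimes\eta_{3,4}\otimes\dots\otimes\eta_{n-2,n-1}\otimes y)$. $\|\cdot\|_{2,\wedge}$ is the projective tensor norm on $\Gamma$ where each factor $H_i\otimes H_{i+1}$ or $H_i^d\otimes H_{i+1}^d$ carries its Hilbert space norm. *)

theory Defs
  imports "HOL-Analysis.Analysis"
begin

text \<open>Concrete model: every (complex) Hilbert space is unitarily isomorphic to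
  l2(I) for some index set I.  H_i = l2(I i), with all index sets living in one
  (arbitrary) type 'a.  H = H_1 \<otimes> ... \<otimes> H_n = l2(PiE {1..n} I), and
  H_j \<otimes> H_(j+1) = l2(I j \<times> I (j+1)).\<close>

definition l2 :: "'i set \<Rightarrow> ('i \<Rightarrow> complex) set" where
  "l2 J = {f. (\<forall>x. x \<notin> J \<longrightarrow> f x = 0) \<and> (\<lambda>x. (cmod (f x))^2) summable_on UNIV}"

definition l2_inner :: "('i \<Rightarrow> complex) \<Rightarrow> ('i \<Rightarrow> complex) \<Rightarrow> complex" where
  "l2_inner f g = infsum (\<lambda>x. f x * cnj (g x)) UNIV"

definition l2_norm :: "('i \<Rightarrow> complex) \<Rightarrow> real" where
  "l2_norm f = sqrt (infsum (\<lambda>x. (cmod (f x))^2) UNIV)"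

definition bounded_op :: "'i set \<Rightarrow> 'j set \<Rightarrow> (('i \<Rightarrow> complex) \<Rightarrow> ('j \<Rightarrow> complex)) \<Rightarrow> bool" where
  "bounded_op J K T \<longleftrightarrow>
     (\<forall>f\<in>l2 J. T f \<in> l2 K) \<and>
     (\<forall>f\<in>l2 J. \<forall>g\<in>l2 J. \<forall>a b. T (\<lambda>x. a * f x + b * g x) = (\<lambda>y. a * T f y + b * T g y)) \<and>
     (\<exists>C. \<forall>f\<in>l2 J. l2_norm (T f) \<le> C * l2_norm f)"

definition op_norm :: "'i set \<Rightarrow> (('i \<Rightarrow> complex) \<Rightarrow> ('j \<Rightarrow> complex)) \<Rightarrow> real" where
  "op_norm J T = Sup {l2_norm (T f) | f. f \<in> l2 J \<and> l2_norm f \<le> 1}"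

definition Htot :: "nat \<Rightarrow> (nat \<Rightarrow> 'a set) \<Rightarrow> (nat \<Rightarrow> 'a) set" where
  "Htot n I = PiE {1..n} I"

definition delta :: "'i \<Rightarrow> 'i \<Rightarrow> complex" where
  "delta b = (\<lambda>a. if a = b then 1 else 0)"

text \<open>Factor j of Gamma (j = 1..n-1) is H_j \<otimes> H_(j+1) (non-dual) iff n - j is odd,
  and (H_j \<otimes> H_(j+1))^d (dual) iff n - j is even.  An elementary tensor of Gamma is
  given by coordinate vectors \<theta> j \<in> l2(I j \<times> I (j+1)): for a non-dual factor
  \<theta> j = \<xi>_(j,j+1); for a dual factor \<theta> j are the coordinates of \<eta>_(j,j+1)^d, i.e.
  \<theta> j = cnj \<circ> \<eta>_(j,j+1) (the identification l2^d = l2 via x^d \<mapsto> cnj \<circ> x).\<close>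

text \<open>The vector \<xi>_(..) \<otimes> ... in H (including x at position 1 when n is odd).\<close>
definition uvec :: "nat \<Rightarrow> (nat \<Rightarrow> ('a \<times> 'a \<Rightarrow> complex)) \<Rightarrow> ('a \<Rightarrow> complex) \<Rightarrow> (nat \<Rightarrow> 'a) \<Rightarrow> complex" where
  "uvec n \<theta> x = (\<lambda>g. if g \<in> extensional {1..n} then
      (\<Prod>j\<in>{j\<in>{1..<n}. odd (n - j)}. \<theta> j (g j, g (Suc j))) * (if even n then 1 else x (g 1))
      else 0)"

text \<open>The vector [x \<otimes>] \<eta>_(..) \<otimes> ... \<otimes> y in H (x at position 1 only when n is even).\<close>
definition wvec :: "nat \<Rightarrow> (nat \<Rightarrow> ('a \<times> 'a \<Rightarrow> complex)) \<Rightarrow> ('a \<Rightarrow> complex) \<Rightarrow> ('a \<Rightarrow> complex) \<Rightarrow> (nat \<Rightarrow> 'a) \<Rightarrow> complex" where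
  "wvec n \<theta> x y = (\<lambda>g. if g \<in> extensional {1..n} then
      (\<Prod>j\<in>{j\<in>{1..<n}. even (n - j)}. cnj (\<theta> j (g j, g (Suc j)))) * (if even n then x (g 1) else 1) * y (g n)
      else 0)"

text \<open>S_\<phi> of an elementary tensor, as an operator l2(I 1) \<rightarrow> l2(I n).
  n odd: domain H_1, (S x)(b) = (S x, e_b) = (\<phi>(x \<otimes> \<xi> ...), \<eta> ... \<otimes> e_b).
  n even: domain H_1^d, identified with l2(I 1) via x^d \<mapsto> z = cnj \<circ> x;
  (S z)(b) = (\<phi>(\<xi> ...), x \<otimes> \<eta> ... \<otimes> e_b) with x = cnj \<circ> z.\<close>
definition Selem :: "nat \<Rightarrow> (nat \<Rightarrow> 'a set) \<Rightarrow> (((nat \<Rightarrow> 'a) \<Rightarrow> complex) \<Rightarrow> ((nat \<Rightarrow> 'a) \<Rightarrow> complex))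
     \<Rightarrow> (nat \<Rightarrow> ('a \<times> 'a \<Rightarrow> complex)) \<Rightarrow> ('a \<Rightarrow> complex) \<Rightarrow> ('a \<Rightarrow> complex)" where
  "Selem n I \<phi> \<theta> z = (\<lambda>b. if b \<in> I n then
      (if even n then l2_inner (\<phi> (uvec n \<theta> z)) (wvec n \<theta> (cnj \<circ> z) (delta b))
       else l2_inner (\<phi> (uvec n \<theta> z)) (wvec n \<theta> z (delta b)))
      else 0)"

text \<open>Gamma realised (injectively) as functions on the product of the factor index sets.\<close>
definition gtensor :: "nat \<Rightarrow> (nat \<Rightarrow> ('a \<times> 'a \<Rightarrow> complex)) \<Rightarrow> (nat \<Rightarrow> 'a \<times> 'a) \<Rightarrow> complex" where
  "gtensor n \<theta> = (\<lambda>g. \<Prod>j\<in>{1..<n}. \<theta> j (g j))"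

definition valid_factors :: "nat \<Rightarrow> (nat \<Rightarrow> 'a set) \<Rightarrow> (nat \<Rightarrow> ('a \<times> 'a \<Rightarrow> complex)) \<Rightarrow> bool" where
  "valid_factors n I \<theta> \<longleftrightarrow> (\<forall>j\<in>{1..<n}. \<theta> j \<in> l2 (I j \<times> I (Suc j)))"

definition reps :: "nat \<Rightarrow> (nat \<Rightarrow> 'a set) \<Rightarrow> ((nat \<Rightarrow> 'a \<times> 'a) \<Rightarrow> complex)
     \<Rightarrow> (nat \<times> (nat \<Rightarrow> nat \<Rightarrow> ('a \<times> 'a \<Rightarrow> complex))) set" where
  "reps n I \<zeta> = {(m, \<Theta>). (\<forall>k<m. valid_factors n I (\<Theta> k)) \<and> \<zeta> = (\<lambda>g. \<Sum>k<m. gtensor n (\<Theta> k) g)}"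

definition Gamma :: "nat \<Rightarrow> (nat \<Rightarrow> 'a set) \<Rightarrow> ((nat \<Rightarrow> 'a \<times> 'a) \<Rightarrow> complex) set" where
  "Gamma n I = {\<zeta>. reps n I \<zeta> \<noteq> {}}"

definition proj_norm :: "nat \<Rightarrow> (nat \<Rightarrow> 'a set) \<Rightarrow> ((nat \<Rightarrow> 'a \<times> 'a) \<Rightarrow> complex) \<Rightarrow> real" where
  "proj_norm n I \<zeta> = Inf {\<Sum>k<m. \<Prod>j\<in>{1..<n}. l2_norm (\<Theta> k j) | m \<Theta>. (m, \<Theta>) \<in> reps n I \<zeta>}"

text \<open>S_\<phi> on Gamma: the linear extension (well defined on l2 inputs).\<close>
definition S_phi :: "nat \<Rightarrow> (nat \<Rightarrow> 'a set) \<Rightarrow> (((nat \<Rightarrow> 'a) \<Rightarrow> complex) \<Rightarrow> ((nat \<Rightarrow> 'a) \<Rightarrow> complex))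
     \<Rightarrow> ((nat \<Rightarrow> 'a \<times> 'a) \<Rightarrow> complex) \<Rightarrow> ('a \<Rightarrow> complex) \<Rightarrow> ('a \<Rightarrow> complex)" where
  "S_phi n I \<phi> \<zeta> = (SOME T. \<exists>m \<Theta>. (m, \<Theta>) \<in> reps n I \<zeta> \<and>
      T = (\<lambda>z b. \<Sum>k<m. Selem n I \<phi> (\<Theta> k) z b))"

end

theory Submission
  imports Defs
begin

text \<open>For an elementary tensor \<theta> the \<open>b\<close>-th coordinate of \<open>S\<^sub>\<phi>(\<theta>) z\<close> is
  \<open>c b = (\<phi> u, w b)\<close>, where \<open>u\<close> and \<open>w b\<close> are elementary tensors of \<open>H\<close> built from \<open>z\<close>, the
  factors of \<theta> and the basis vector \<open>e\<^sub>b\<close>.  As \<open>W = \<Sum>b. c b \<cdot> w b\<close> is again an elementary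
  tensor, Cauchy-Schwarz gives \<open>\<Sum>b. \<bar>c b\<bar>\<^sup>2 = (\<phi> u, W) \<le> \<parallel>\<phi>\<parallel> \<parallel>u\<parallel> \<parallel>W\<parallel>\<close>, while
  \<open>\<parallel>u\<parallel> \<parallel>W\<parallel> \<le> (\<Prod>j. \<parallel>\<theta> j\<parallel>) \<parallel>z\<parallel> sqrt (\<Sum>b. \<bar>c b\<bar>\<^sup>2)\<close>.
  A general \<zeta> is handled by the triangle inequality over a representation \<open>\<zeta> = \<Sum>k. \<theta>\<^sub>k\<close>,
  once \<open>S\<^sub>\<phi>(\<zeta>)\<close> is known not to depend on the representation: this is the universal property of
  the algebraic tensor product, applied to the bilinear form \<open>(u, v) \<mapsto> \<Sum>h. (\<phi> u) h \<cdot> v h\<close>.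
  The infimum over all representations is the projective norm.\<close>

lemma l2_summable_sq: "f \<in> l2 J \<Longrightarrow> (\<lambda>x. (cmod (f x))^2) summable_on UNIV"
  by (simp add: l2_def)

lemma l2_zero_outside: "f \<in> l2 J \<Longrightarrow> x \<notin> J \<Longrightarrow> f x = 0"
  by (simp add: l2_def)

lemma l2_zero: "(\<lambda>_. 0) \<in> l2 J"
  by (simp add: l2_def)

lemma l2_cnj: "f \<in> l2 J \<Longrightarrow> (\<lambda>x. cnj (f x)) \<in> l2 J"
  by (simp add: l2_def)

lemma l2_abs_summable_mult:
  assumes "f \<in> l2 J" "g \<in> l2 K"
  shows "(\<lambda>x. norm (f x * g x)) summable_on UNIV"
proof (rule Infinite_Sum.abs_summable_on_comparison_test')
  show "(\<lambda>x. (cmod (f x))^2 + (cmod (g x))^2) summable_on UNIV"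
    using assms by (intro summable_on_add l2_summable_sq)
  show "norm (f x * g x) \<le> (cmod (f x))^2 + (cmod (g x))^2" for x
    unfolding norm_mult using sum_squares_bound[of "cmod (f x)" "cmod (g x)"]
      mult_nonneg_nonneg[OF norm_ge_zero norm_ge_zero, of "f x" "g x"]
    by linarith
qed

lemma l2_summable_mult: "f \<in> l2 J \<Longrightarrow> g \<in> l2 K \<Longrightarrow> (\<lambda>x. f x * g x) summable_on UNIV"
  by (rule abs_summable_summable[OF l2_abs_summable_mult])

lemma l2_lincomb:
  assumes "f \<in> l2 J" "g \<in> l2 J"
  shows "(\<lambda>x. a * f x + b * g x) \<in> l2 J"
proof -
  have "(\<lambda>x. (cmod (a * f x + b * g x))^2) summable_on UNIV"
  proof (rule summable_on_comparison_test)
    show "(\<lambda>x. 2 * (cmod a)^2 * (cmod (f x))^2 + 2 * (cmod b)^2 * (cmod (g x))^2) summable_on UNIV"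
      using assms by (intro summable_on_add summable_on_cmult_right l2_summable_sq)
    fix x
    have "cmod (a * f x + b * g x) \<le> cmod a * cmod (f x) + cmod b * cmod (g x)"
      by (metis norm_mult norm_triangle_ineq)
    then have "(cmod (a * f x + b * g x))^2 \<le> (cmod a * cmod (f x) + cmod b * cmod (g x))^2"
      by (simp add: power_mono)
    also have "\<dots> \<le> 2 * (cmod a * cmod (f x))^2 + 2 * (cmod b * cmod (g x))^2"
      using sum_squares_bound[of "cmod a * cmod (f x)" "cmod b * cmod (g x)"]
      by (simp add: power2_sum)
    finally show "(cmod (a * f x + b * g x))^2
      \<le> 2 * (cmod a)^2 * (cmod (f x))^2 + 2 * (cmod b)^2 * (cmod (g x))^2"
      by (simp add: power_mult_distrib)
  qed simp
  then show ?thesis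
    using assms by (auto simp: l2_def)
qed

lemma l2_norm_nonneg: "0 \<le> l2_norm f"
  by (simp add: l2_norm_def infsum_nonneg)

lemma l2_norm_square: "(l2_norm f)^2 = infsum (\<lambda>x. (cmod (f x))^2) UNIV"
  by (simp add: l2_norm_def infsum_nonneg)

lemma l2_norm_cnj: "l2_norm (\<lambda>x. cnj (f x)) = l2_norm f"
  by (simp add: l2_norm_def)

lemma l2_norm_scale: "l2_norm (\<lambda>x. c * f x) = cmod c * l2_norm f"
  by (simp add: l2_norm_def norm_mult power_mult_distrib infsum_cmult_right' real_sqrt_mult)

lemma l2_finite_support:
  assumes "finite F" "F \<subseteq> K" "\<And>x. x \<notin> F \<Longrightarrow> f x = 0"
  shows "f \<in> l2 K" "l2_norm f = L2_set (\<lambda>x. cmod (f x)) F"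
proof -
  have "(\<lambda>x. (cmod (f x))^2) summable_on UNIV \<longleftrightarrow> (\<lambda>x. (cmod (f x))^2) summable_on F"
    using assms(3) by (intro summable_on_cong_neutral) auto
  then show "f \<in> l2 K"
    using assms by (auto simp: l2_def)
  have "infsum (\<lambda>x. (cmod (f x))^2) UNIV = infsum (\<lambda>x. (cmod (f x))^2) F"
    using assms(3) by (intro infsum_cong_neutral) auto
  then show "l2_norm f = L2_set (\<lambda>x. cmod (f x)) F"
    using assms(1) by (simp add: l2_norm_def L2_set_def)
qed

lemma l2_restrict_finite:
  assumes "finite F" "F \<subseteq> K"
  shows "(\<lambda>s. if s \<in> F then c s else 0) \<in> l2 K"
    and "l2_norm (\<lambda>s. if s \<in> F then c s else 0) = L2_set (\<lambda>s. cmod (c s)) F"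
proof -
  have supp: "\<And>s. s \<notin> F \<Longrightarrow> (if s \<in> F then c s else 0) = 0"
    by simp
  show "(\<lambda>s. if s \<in> F then c s else 0) \<in> l2 K"
    by (rule l2_finite_support(1)[OF assms supp])
  have "l2_norm (\<lambda>s. if s \<in> F then c s else 0) = L2_set (\<lambda>s. cmod (if s \<in> F then c s else 0)) F"
    by (rule l2_finite_support(2)[OF assms supp])
  also have "\<dots> = L2_set (\<lambda>s. cmod (c s)) F"
    by (intro L2_set_cong) simp_all
  finally show "l2_norm (\<lambda>s. if s \<in> F then c s else 0) = L2_set (\<lambda>s. cmod (c s)) F" .
qed

lemma delta_in_l2: "b \<in> K \<Longrightarrow> delta b \<in> l2 K"
  by (rule l2_finite_support[of "{b}"]) (auto simp: delta_def)

lemma sum_le_l2_norm_square: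
  "f \<in> l2 J \<Longrightarrow> finite F \<Longrightarrow> (\<Sum>x\<in>F. (cmod (f x))^2) \<le> (l2_norm f)^2"
  unfolding l2_norm_square by (intro finite_sum_le_infsum l2_summable_sq) auto

lemma L2_set_le_l2_norm: "f \<in> l2 J \<Longrightarrow> L2_set (\<lambda>x. cmod (f x)) F \<le> l2_norm f"
  by (cases "finite F")
    (simp_all add: L2_set_def l2_norm_nonneg real_le_lsqrt sum_le_l2_norm_square)

lemma l2_norm_eq_zero_imp: "f \<in> l2 J \<Longrightarrow> l2_norm f = 0 \<Longrightarrow> f = (\<lambda>_. 0)"
  using sum_le_l2_norm_square[of f J "{x}" for x] by fastforce

lemma summable_sq_of_bounded_finite_sums:
  "(\<And>F. finite F \<Longrightarrow> (\<Sum>x\<in>F. (cmod (f x))^2) \<le> C) \<Longrightarrow> (\<lambda>x. (cmod (f x))^2) summable_on UNIV"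
  by (intro nonneg_bdd_above_summable_on bdd_aboveI2[where M = C]) auto

lemma l2_norm_square_le_of_bounded_finite_sums:
  assumes "\<And>F. finite F \<Longrightarrow> (\<Sum>x\<in>F. (cmod (f x))^2) \<le> C"
  shows "(l2_norm f)^2 \<le> C"
  unfolding l2_norm_square
  by (rule infsum_le_finite_sums[OF summable_sq_of_bounded_finite_sums]) (use assms in auto)

lemma l2_norm_le_of_bounded_L2_set:
  assumes "\<And>F. finite F \<Longrightarrow> L2_set (\<lambda>x. cmod (f x)) F \<le> C" "0 \<le> C"
  shows "l2_norm f \<le> C"
proof -
  have "(\<Sum>x\<in>F. (cmod (f x))^2) \<le> C^2" if "finite F" for F
    using assms(1)[OF that] by (simp add: L2_set_def real_sqrt_le_iff sqrt_le_D)
  then have "(l2_norm f)^2 \<le> C^2"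
    by (rule l2_norm_square_le_of_bounded_finite_sums)
  then show ?thesis
    using assms(2) by (rule power2_le_imp_le)
qed

lemma l2_inner_Cauchy_Schwarz:
  assumes "f \<in> l2 J" "g \<in> l2 K"
  shows "cmod (l2_inner f g) \<le> l2_norm f * l2_norm g"
proof -
  have abs: "(\<lambda>x. norm (f x * cnj (g x))) summable_on UNIV"
    using assms by (intro l2_abs_summable_mult l2_cnj)
  have "cmod (l2_inner f g) \<le> infsum (\<lambda>x. norm (f x * cnj (g x))) UNIV"
    unfolding l2_inner_def by (rule norm_infsum_bound[OF abs])
  also have "\<dots> \<le> l2_norm f * l2_norm g"
  proof (rule infsum_le_finite_sums[OF abs])
    fix F :: "'a set"
    have "(\<Sum>x\<in>F. norm (f x * cnj (g x))) = (\<Sum>x\<in>F. \<bar>cmod (f x)\<bar> * \<bar>cmod (g x)\<bar>)"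
      by (simp add: norm_mult)
    also have "\<dots> \<le> L2_set (\<lambda>x. cmod (f x)) F * L2_set (\<lambda>x. cmod (g x)) F"
      by (rule L2_set_mult_ineq)
    also have "\<dots> \<le> l2_norm f * l2_norm g"
      using assms by (intro mult_mono L2_set_le_l2_norm l2_norm_nonneg L2_set_nonneg)
    finally show "(\<Sum>x\<in>F. norm (f x * cnj (g x))) \<le> l2_norm f * l2_norm g" .
  qed
  finally show ?thesis .
qed

lemma has_sum_sum:
  fixes f :: "'k \<Rightarrow> 'x \<Rightarrow> complex"
  shows "finite K \<Longrightarrow> (\<And>k. k \<in> K \<Longrightarrow> (f k has_sum s k) A) \<Longrightarrow>
    ((\<lambda>x. \<Sum>k\<in>K. f k x) has_sum (\<Sum>k\<in>K. s k)) A"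
  by (induction K rule: finite_induct) (auto intro: has_sum_add)

lemma l2_inner_sum_right:
  assumes "finite F" "v \<in> l2 J" "\<And>b. b \<in> F \<Longrightarrow> w b \<in> l2 K"
  shows "l2_inner v (\<lambda>h. \<Sum>b\<in>F. c b * w b h) = (\<Sum>b\<in>F. cnj (c b) * l2_inner v (w b))"
proof -
  have "((\<lambda>h. cnj (c b) * (v h * cnj (w b h))) has_sum cnj (c b) * l2_inner v (w b)) UNIV"
    if "b \<in> F" for b
    unfolding l2_inner_def
    using assms that by (intro has_sum_cmult_right has_sum_infsum l2_summable_mult l2_cnj)
  then have "((\<lambda>h. \<Sum>b\<in>F. cnj (c b) * (v h * cnj (w b h)))
      has_sum (\<Sum>b\<in>F. cnj (c b) * l2_inner v (w b))) UNIV"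
    by (rule has_sum_sum[OF assms(1)])
  then show ?thesis
    unfolding l2_inner_def by (simp add: infsumI sum_distrib_left mult_ac)
qed

lemma bounded_op_maps_l2: "bounded_op J K T \<Longrightarrow> f \<in> l2 J \<Longrightarrow> T f \<in> l2 K"
  by (simp add: bounded_op_def)

lemma bounded_op_lincomb:
  "bounded_op J K T \<Longrightarrow> f \<in> l2 J \<Longrightarrow> g \<in> l2 J \<Longrightarrow>
    T (\<lambda>x. a * f x + b * g x) = (\<lambda>y. a * T f y + b * T g y)"
  by (simp add: bounded_op_def)

lemma bounded_op_zero: "bounded_op J K T \<Longrightarrow> T (\<lambda>_. 0) = (\<lambda>_. 0)"
  using bounded_op_lincomb[OF _ l2_zero l2_zero, of J K T 0 0] by simp

lemma bounded_op_scale: "bounded_op J K T \<Longrightarrow> f \<in> l2 J \<Longrightarrow> T (\<lambda>x. c * f x) = (\<lambda>y. c * T f y)"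
  using bounded_op_lincomb[of J K T f f c 0] by simp

lemma bdd_above_bounded_op_norms:
  assumes "bounded_op J K T"
  shows "bdd_above {l2_norm (T f) | f. f \<in> l2 J \<and> l2_norm f \<le> 1}"
proof -
  obtain C where C: "\<And>f. f \<in> l2 J \<Longrightarrow> l2_norm (T f) \<le> C * l2_norm f"
    using assms unfolding bounded_op_def by blast
  have "l2_norm (T f) \<le> \<bar>C\<bar>" if "f \<in> l2 J" "l2_norm f \<le> 1" for f
  proof -
    have "l2_norm (T f) \<le> \<bar>C\<bar> * l2_norm f"
      using C[OF that(1)] mult_right_mono[OF abs_ge_self l2_norm_nonneg] by (rule order_trans)
    also have "\<dots> \<le> \<bar>C\<bar>"
      using mult_left_mono[OF that(2), of "\<bar>C\<bar>"] by simp
    finally show ?thesis .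
  qed
  then show ?thesis
    by (intro bdd_aboveI[where M = "\<bar>C\<bar>"]) blast
qed

lemma op_norm_nonneg:
  assumes "bounded_op J K T"
  shows "0 \<le> op_norm J T"
proof -
  have "l2_norm (T (\<lambda>_. 0)) \<in> {l2_norm (T f) | f. f \<in> l2 J \<and> l2_norm f \<le> 1}"
    by (auto simp: l2_zero l2_norm_def)
  then have "l2_norm (T (\<lambda>_. 0)) \<le> op_norm J T"
    unfolding op_norm_def by (rule cSup_upper[OF _ bdd_above_bounded_op_norms[OF assms]])
  then show ?thesis
    by (simp add: bounded_op_zero[OF assms] l2_norm_def)
qed

lemma op_norm_bound:
  assumes T: "bounded_op J K T" and f: "f \<in> l2 J"
  shows "l2_norm (T f) \<le> op_norm J T * l2_norm f"
proof (cases "l2_norm f = 0")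
  case True
  then show ?thesis
    using l2_norm_eq_zero_imp[OF f] bounded_op_zero[OF T] by (simp add: l2_norm_def)
next
  case False
  then have pos: "0 < l2_norm f"
    using l2_norm_nonneg[of f] by linarith
  define c where "c = complex_of_real (1 / l2_norm f)"
  have "(\<lambda>x. c * f x) \<in> l2 J"
    using l2_lincomb[OF f f, of c 0] by simp
  moreover have "l2_norm (\<lambda>x. c * f x) = 1"
    unfolding l2_norm_scale c_def using pos by (simp add: norm_divide)
  ultimately have "l2_norm (T (\<lambda>x. c * f x)) \<le> op_norm J T"
    unfolding op_norm_def by (intro cSup_upper bdd_above_bounded_op_norms[OF T]) auto
  moreover have "l2_norm (T (\<lambda>x. c * f x)) = l2_norm (T f) / l2_norm f"
    unfolding bounded_op_scale[OF T f] l2_norm_scale c_def using pos by (simp add: norm_divide)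
  ultimately show ?thesis
    using pos by (simp add: divide_le_eq mult.commute)
qed

lemma op_norm_le:
  assumes "\<And>f. f \<in> l2 J \<Longrightarrow> l2_norm f \<le> 1 \<Longrightarrow> l2_norm (T f) \<le> C"
  shows "op_norm J T \<le> C"
  unfolding op_norm_def using assms l2_zero[of J]
  by (intro cSup_least) (auto simp: l2_norm_def)

section \<open>Bilinear forms on algebraic tensor products\<close>

definition lin_closed :: "('x \<Rightarrow> complex) set \<Rightarrow> bool" where
  "lin_closed P \<longleftrightarrow> (\<lambda>_. 0) \<in> P \<and> (\<forall>u\<in>P. \<forall>v\<in>P. \<forall>a b. (\<lambda>x. a * u x + b * v x) \<in> P)"

definition bilinear_on :: "('x \<Rightarrow> complex) set \<Rightarrow> ('y \<Rightarrow> complex) set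
    \<Rightarrow> (('x \<Rightarrow> complex) \<Rightarrow> ('y \<Rightarrow> complex) \<Rightarrow> complex) \<Rightarrow> bool" where
  "bilinear_on P Q B \<longleftrightarrow>
     (\<forall>u1\<in>P. \<forall>u2\<in>P. \<forall>v\<in>Q. \<forall>a b. B (\<lambda>x. a * u1 x + b * u2 x) v = a * B u1 v + b * B u2 v) \<and>
     (\<forall>u\<in>P. \<forall>v1\<in>Q. \<forall>v2\<in>Q. \<forall>a b. B u (\<lambda>y. a * v1 y + b * v2 y) = a * B u v1 + b * B u v2)"

lemma lin_closed_lincomb:
  "lin_closed P \<Longrightarrow> u \<in> P \<Longrightarrow> v \<in> P \<Longrightarrow> (\<lambda>x. a * u x + b * v x) \<in> P"
  by (simp add: lin_closed_def)

lemma lin_closed_uminus: "lin_closed P \<Longrightarrow> u \<in> P \<Longrightarrow> (\<lambda>x. - u x) \<in> P"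
  using lin_closed_lincomb[of P u u "-1" 0] by simp

lemma lin_closed_sum:
  assumes "lin_closed P" "finite K" "\<And>k. k \<in> K \<Longrightarrow> u k \<in> P"
  shows "(\<lambda>x. \<Sum>k\<in>K. c k * u k x) \<in> P"
  using assms(2,3)
proof (induction K rule: finite_induct)
  case empty
  then show ?case
    using assms(1) by (simp add: lin_closed_def)
next
  case (insert k K)
  then show ?case
    using lin_closed_lincomb[OF assms(1), of "u k" "\<lambda>x. \<Sum>k\<in>K. c k * u k x" "c k" 1] by simp
qed

lemma lin_closed_l2: "lin_closed (l2 J)"
  by (simp add: lin_closed_def l2_zero l2_lincomb)

lemma bilinear_on_lincomb_left:
  "bilinear_on P Q B \<Longrightarrow> u1 \<in> P \<Longrightarrow> u2 \<in> P \<Longrightarrow> v \<in> Q \<Longrightarrow>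
    B (\<lambda>x. a * u1 x + b * u2 x) v = a * B u1 v + b * B u2 v"
  by (simp add: bilinear_on_def)

lemma bilinear_on_lincomb_right:
  "bilinear_on P Q B \<Longrightarrow> u \<in> P \<Longrightarrow> v1 \<in> Q \<Longrightarrow> v2 \<in> Q \<Longrightarrow>
    B u (\<lambda>y. a * v1 y + b * v2 y) = a * B u v1 + b * B u v2"
  by (simp add: bilinear_on_def)

lemma bilinear_on_scale_right:
  "bilinear_on P Q B \<Longrightarrow> u \<in> P \<Longrightarrow> v \<in> Q \<Longrightarrow> B u (\<lambda>y. a * v y) = a * B u v"
  using bilinear_on_lincomb_right[of P Q B u v v a 0] by simp

lemma bilinear_on_sum_left:
  assumes P: "lin_closed P" and B: "bilinear_on P Q B"
    and "finite K" "v \<in> Q" "\<And>k. k \<in> K \<Longrightarrow> u k \<in> P"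
  shows "B (\<lambda>x. \<Sum>k\<in>K. c k * u k x) v = (\<Sum>k\<in>K. c k * B (u k) v)"
  using assms(3,5)
proof (induction K rule: finite_induct)
  case empty
  have "(\<lambda>_. 0) \<in> P"
    using P by (simp add: lin_closed_def)
  then show ?case
    using bilinear_on_lincomb_left[OF B _ _ \<open>v \<in> Q\<close>, of "\<lambda>_. 0" "\<lambda>_. 0" 0 0] by simp
next
  case (insert k K)
  then have "(\<lambda>x. \<Sum>k\<in>K. c k * u k x) \<in> P"
    by (intro lin_closed_sum[OF P]) auto
  then show ?case
    using insert bilinear_on_lincomb_left[OF B _ _ \<open>v \<in> Q\<close>, of "u k" "\<lambda>x. \<Sum>k\<in>K. c k * u k x" "c k" 1]
    by simp
qed

lemma bilinear_on_sum_absorb: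
  assumes P: "lin_closed P" and B: "bilinear_on P Q B" and K: "finite K" "k0 \<notin> K"
    and u: "\<And>k. k \<in> K \<Longrightarrow> u k \<in> P" and v: "\<And>k. k \<in> K \<Longrightarrow> v k \<in> Q" "v k0 \<in> Q"
    and u0: "u k0 = (\<lambda>g. \<Sum>k\<in>K. c k * u k g)"
  shows "(\<Sum>k\<in>insert k0 K. u k g * v k h) = (\<Sum>k\<in>K. u k g * (v k h + c k * v k0 h))"
    and "(\<Sum>k\<in>insert k0 K. B (u k) (v k)) = (\<Sum>k\<in>K. B (u k) (\<lambda>h. v k h + c k * v k0 h))"
proof -
  show "(\<Sum>k\<in>insert k0 K. u k g * v k h) = (\<Sum>k\<in>K. u k g * (v k h + c k * v k0 h))"
    using K by (simp add: u0 algebra_simps sum.distrib sum_distrib_left)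
  have "B (u k) (\<lambda>h. v k h + c k * v k0 h) = B (u k) (v k) + c k * B (u k) (v k0)" if "k \<in> K" for k
    using bilinear_on_lincomb_right[OF B u[OF that] v(1)[OF that] v(2), of 1 "c k"] by simp
  moreover have "B (u k0) (v k0) = (\<Sum>k\<in>K. c k * B (u k) (v k0))"
    unfolding u0 by (rule bilinear_on_sum_left[OF P B K(1) v(2) u])
  ultimately show "(\<Sum>k\<in>insert k0 K. B (u k) (v k)) = (\<Sum>k\<in>K. B (u k) (\<lambda>h. v k h + c k * v k0 h))"
    using K by (simp add: sum.distrib)
qed

text \<open>The universal property of the algebraic tensor product.  If \<open>v k0\<close> does not vanish at
  \<open>h0\<close>, evaluating the hypothesis at \<open>h0\<close> writes \<open>u k0\<close> as a combination of the other
  \<open>u k\<close>, and the term with index \<open>k0\<close> is absorbed into the remaining \<open>v k\<close>.\<close>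
lemma bilinear_on_sum_eq_zero:
  assumes P: "lin_closed P" and Q: "lin_closed Q" and B: "bilinear_on P Q B" and "finite K"
  shows "(\<And>k. k \<in> K \<Longrightarrow> u k \<in> P) \<Longrightarrow> (\<And>k. k \<in> K \<Longrightarrow> v k \<in> Q) \<Longrightarrow>
    (\<And>g h. (\<Sum>k\<in>K. u k g * v k h) = 0) \<Longrightarrow> (\<Sum>k\<in>K. B (u k) (v k)) = 0"
  using \<open>finite K\<close>
proof (induction K arbitrary: v rule: finite_induct)
  case empty
  then show ?case by simp
next
  case (insert k0 K)
  have u: "\<And>k. k \<in> K \<Longrightarrow> u k \<in> P" "u k0 \<in> P" and v: "\<And>k. k \<in> K \<Longrightarrow> v k \<in> Q" "v k0 \<in> Q"
    using insert.prems by auto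
  have zero: "(\<Sum>k\<in>K. u k g * v k h) + u k0 g * v k0 h = 0" for g h
    using insert.prems(3)[of g h] insert.hyps by (simp add: add.commute)
  show ?case
  proof (cases "\<forall>h. v k0 h = 0")
    case True
    then have "(\<Sum>k\<in>K. B (u k) (v k)) = 0"
      using zero by (intro insert.IH u v) auto
    moreover have "v k0 = (\<lambda>h. 0 * v k0 h)"
      using True by (simp add: fun_eq_iff)
    then have "B (u k0) (v k0) = 0"
      using bilinear_on_scale_right[OF B u(2) v(2), of 0] by simp
    ultimately show ?thesis
      using insert.hyps by simp
  next
    case False
    then obtain h0 where h0: "v k0 h0 \<noteq> 0"
      by blast
    define c where "c k = - v k h0 / v k0 h0" for k
    have u0: "u k0 = (\<lambda>g. \<Sum>k\<in>K. c k * u k g)"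
    proof
      show "u k0 g = (\<Sum>k\<in>K. c k * u k g)" for g
        using zero[of g h0] h0
        by (simp add: c_def sum_divide_distrib[symmetric] sum_negf field_simps add_eq_0_iff)
    qed
    note absorb = bilinear_on_sum_absorb[where u = u and v = v, OF P B insert.hyps u(1) v u0]
    have "(\<Sum>k\<in>K. B (u k) (\<lambda>h. v k h + c k * v k0 h)) = 0"
    proof (rule insert.IH[OF u(1)])
      show "(\<lambda>h. v k h + c k * v k0 h) \<in> Q" if "k \<in> K" for k
        using lin_closed_lincomb[OF Q v(1)[OF that] v(2), of 1 "c k"] by simp
      show "(\<Sum>k\<in>K. u k g * (v k h + c k * v k0 h)) = 0" for g h
        using absorb(1)[of g h] insert.prems(3)[of g h] by simp
    qed
    then show ?thesis
      using absorb(2) by simp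
  qed
qed

lemma bilinear_on_sum_eq:
  assumes P: "lin_closed P" and Q: "lin_closed Q" and B: "bilinear_on P Q B"
    and fin: "finite K" "finite K'"
    and u: "\<And>k. k \<in> K \<Longrightarrow> u k \<in> P" "\<And>k. k \<in> K' \<Longrightarrow> u' k \<in> P"
    and v: "\<And>k. k \<in> K \<Longrightarrow> v k \<in> Q" "\<And>k. k \<in> K' \<Longrightarrow> v' k \<in> Q"
    and eq: "\<And>g h. (\<Sum>k\<in>K. u k g * v k h) = (\<Sum>k\<in>K'. u' k g * v' k h)"
  shows "(\<Sum>k\<in>K. B (u k) (v k)) = (\<Sum>k\<in>K'. B (u' k) (v' k))"
proof -
  define U where "U = case_sum u u'"
  define V where "V = case_sum v (\<lambda>k h. - v' k h)"
  have "(\<Sum>k\<in>K <+> K'. B (U k) (V k)) = 0"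
  proof (rule bilinear_on_sum_eq_zero[OF P Q B finite_Plus[OF fin]])
    show "U k \<in> P" "V k \<in> Q" if "k \<in> K <+> K'" for k
      using that u v lin_closed_uminus[OF Q] by (auto simp: U_def V_def)
    show "(\<Sum>k\<in>K <+> K'. U k g * V k h) = 0" for g h
      using eq[of g h] fin by (simp add: sum.Plus U_def V_def sum_negf)
  qed
  moreover have "B (u' k) (\<lambda>h. - v' k h) = - B (u' k) (v' k)" if "k \<in> K'" for k
    using bilinear_on_scale_right[OF B u(2)[OF that] v(2)[OF that], of "-1"] by simp
  ultimately show ?thesis
    using fin by (simp add: sum.Plus U_def V_def sum_negf)
qed

section \<open>Elementary tensors in \<open>H\<close>\<close>

lemma sum_prod_le_of_injective_keys:
  fixes a :: "'j \<Rightarrow> 'k \<Rightarrow> real" and key :: "'j \<Rightarrow> 'g \<Rightarrow> 'k"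
  assumes "finite J" "finite G"
    and nonneg: "\<And>j t. j \<in> J \<Longrightarrow> 0 \<le> a j t"
    and bound: "\<And>j T. j \<in> J \<Longrightarrow> finite T \<Longrightarrow> sum (a j) T \<le> A j"
    and inj: "\<And>g1 g2. g1 \<in> G \<Longrightarrow> g2 \<in> G \<Longrightarrow> (\<forall>j\<in>J. key j g1 = key j g2) \<Longrightarrow> g1 = g2"
  shows "(\<Sum>g\<in>G. \<Prod>j\<in>J. a j (key j g)) \<le> (\<Prod>j\<in>J. A j)"
proof -
  define \<Psi> where "\<Psi> g = restrict (\<lambda>j. key j g) J" for g
  have "inj_on \<Psi> G"
    by (rule inj_onI, rule inj) (auto simp: \<Psi>_def restrict_def fun_eq_iff split: if_splits)
  have "(\<Sum>g\<in>G. \<Prod>j\<in>J. a j (key j g)) = (\<Sum>g\<in>G. \<Prod>j\<in>J. a j (\<Psi> g j))"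
    by (intro sum.cong prod.cong) (auto simp: \<Psi>_def)
  also have "\<dots> = (\<Sum>p\<in>\<Psi> ` G. \<Prod>j\<in>J. a j (p j))"
    using \<open>inj_on \<Psi> G\<close> by (simp add: sum.reindex)
  also have "\<dots> \<le> (\<Sum>p\<in>PiE J (\<lambda>j. key j ` G). \<Prod>j\<in>J. a j (p j))"
    using assms(1,2) by (intro sum_mono2 prod_nonneg) (auto simp: \<Psi>_def finite_PiE nonneg)
  also have "\<dots> = (\<Prod>j\<in>J. \<Sum>t\<in>key j ` G. a j t)"
    using assms(1,2) by (intro prod_sum_PiE[symmetric]) auto
  also have "\<dots> \<le> (\<Prod>j\<in>J. A j)"
    using assms(2) by (intro prod_mono) (auto intro: sum_nonneg nonneg bound)
  finally show ?thesis .
qed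

text \<open>The pairs of coordinates may overlap, so only an inequality holds: as they cover \<open>{1..n}\<close>,
  \<open>g\<close> is determined by its pairs, which bounds finite square sums of \<open>F\<close> by a product of
  square sums of the factors.\<close>
lemma l2_tensor_product:
  fixes f :: "nat \<Rightarrow> 'a \<times> 'a \<Rightarrow> complex" and lo hi :: "nat \<Rightarrow> nat"
  assumes "finite J"
    and f: "\<And>j. j \<in> J \<Longrightarrow> f j \<in> l2 (I (lo j) \<times> I (hi j))"
    and cover: "{1..n} \<subseteq> (\<Union>j\<in>J. {lo j, hi j})"
  defines "F \<equiv> \<lambda>g. if g \<in> extensional {1..n} then \<Prod>j\<in>J. f j (g (lo j), g (hi j)) else 0"
  shows "F \<in> l2 (Htot n I)" "l2_norm F \<le> (\<Prod>j\<in>J. l2_norm (f j))"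
proof -
  let ?E = "extensional {1..n}"
  have F_zero: "F g = 0" if g: "g \<notin> Htot n I" for g
  proof (cases "g \<in> ?E")
    case True
    then obtain i where "i \<in> {1..n}" "g i \<notin> I i"
      using g by (auto simp: Htot_def PiE_iff)
    moreover obtain j where "j \<in> J" "i = lo j \<or> i = hi j"
      using cover \<open>i \<in> {1..n}\<close> by blast
    ultimately have "f j (g (lo j), g (hi j)) = 0"
      using f by (intro l2_zero_outside) auto
    then show ?thesis
      using True \<open>j \<in> J\<close> \<open>finite J\<close> by (auto simp: F_def intro: prod_zero)
  qed (simp add: F_def)
  have sums: "(\<Sum>g\<in>G. (cmod (F g))^2) \<le> (\<Prod>j\<in>J. (l2_norm (f j))^2)" if "finite G" for G
  proof -
    have "(\<Sum>g\<in>G. (cmod (F g))^2) = (\<Sum>g\<in>G \<inter> ?E. \<Prod>j\<in>J. (cmod (f j (g (lo j), g (hi j))))^2)"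
      using that by (intro sum.mono_neutral_cong_right)
        (auto simp: F_def prod_norm[symmetric] prod_power_distrib)
    also have "\<dots> \<le> (\<Prod>j\<in>J. (l2_norm (f j))^2)"
    proof (rule sum_prod_le_of_injective_keys[where key = "\<lambda>j g. (g (lo j), g (hi j))"])
      show "g1 = g2" if "g1 \<in> G \<inter> ?E" "g2 \<in> G \<inter> ?E"
        and "\<forall>j\<in>J. (g1 (lo j), g1 (hi j)) = (g2 (lo j), g2 (hi j))" for g1 g2
        using that cover by (intro extensionalityI[of g1 "{1..n}"]) blast+
    qed (use that \<open>finite J\<close> f in \<open>auto intro: sum_le_l2_norm_square\<close>)
    finally show ?thesis .
  qed
  show "F \<in> l2 (Htot n I)"
    using F_zero summable_sq_of_bounded_finite_sums[OF sums] by (auto simp: l2_def)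
  have "(l2_norm F)^2 \<le> (\<Prod>j\<in>J. l2_norm (f j))^2"
    unfolding prod_power_distrib by (rule l2_norm_square_le_of_bounded_finite_sums[OF sums])
  then show "l2_norm F \<le> (\<Prod>j\<in>J. l2_norm (f j))"
    by (rule power2_le_imp_le) (simp add: prod_nonneg l2_norm_nonneg)
qed

definition diag :: "('a \<Rightarrow> complex) \<Rightarrow> 'a \<times> 'a \<Rightarrow> complex" where
  "diag x t = (if fst t = snd t then x (fst t) else 0)"

lemma diag_sq_reindex:
  fixes x :: "'a \<Rightarrow> complex"
  shows "(\<lambda>t. (cmod (diag x t))^2) summable_on UNIV \<longleftrightarrow> (\<lambda>s. (cmod (x s))^2) summable_on UNIV"
    and "infsum (\<lambda>t. (cmod (diag x t))^2) UNIV = infsum (\<lambda>s. (cmod (x s))^2) UNIV"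
proof -
  let ?d = "\<lambda>s::'a. (s, s)"
  have inj: "inj ?d"
    by (rule injI) simp
  have off: "\<And>t. t \<in> UNIV - range ?d \<Longrightarrow> (cmod (diag x t))^2 = 0"
    by (auto simp: diag_def prod_eq_iff)
  have "(\<lambda>t. (cmod (diag x t))^2) summable_on UNIV \<longleftrightarrow> (\<lambda>t. (cmod (diag x t))^2) summable_on range ?d"
    using off by (intro summable_on_cong_neutral) auto
  then show "(\<lambda>t. (cmod (diag x t))^2) summable_on UNIV \<longleftrightarrow> (\<lambda>s. (cmod (x s))^2) summable_on UNIV"
    by (simp add: summable_on_reindex[OF inj] o_def diag_def)
  have "infsum (\<lambda>t. (cmod (diag x t))^2) UNIV = infsum (\<lambda>t. (cmod (diag x t))^2) (range ?d)"
    using off by (intro infsum_cong_neutral) auto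
  then show "infsum (\<lambda>t. (cmod (diag x t))^2) UNIV = infsum (\<lambda>s. (cmod (x s))^2) UNIV"
    by (simp add: infsum_reindex[OF inj] o_def diag_def)
qed

lemma diag_in_l2: "x \<in> l2 J \<Longrightarrow> diag x \<in> l2 (J \<times> J)"
  unfolding l2_def mem_Collect_eq diag_sq_reindex(1) by (auto simp: diag_def)

lemma l2_norm_diag: "l2_norm (diag x) = l2_norm x"
  by (simp add: l2_norm_def diag_sq_reindex)

definition nondual_factors :: "nat \<Rightarrow> nat set" where
  "nondual_factors n = {j\<in>{1..<n}. odd (n - j)}"

definition dual_factors :: "nat \<Rightarrow> nat set" where
  "dual_factors n = {j\<in>{1..<n}. even (n - j)}"

text \<open>Factor \<open>j \<in> {1..<n}\<close> of an elementary tensor lives on the coordinates \<open>j, j + 1\<close>; the vectors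
  \<open>x\<close> at coordinate 1 and \<open>y\<close> at coordinate \<open>n\<close> become diagonal factors with indices 0 and \<open>n\<close>.\<close>
definition left_coord :: "nat \<Rightarrow> nat" where
  "left_coord j = (if j = 0 then 1 else j)"

definition right_coord :: "nat \<Rightarrow> nat \<Rightarrow> nat" where
  "right_coord n j = (if j = 0 then 1 else if j = n then n else Suc j)"

definition uvec_factors :: "nat \<Rightarrow> nat set" where
  "uvec_factors n = nondual_factors n \<union> (if even n then {} else {0})"

definition wvec_factors :: "nat \<Rightarrow> nat set" where
  "wvec_factors n = insert n (dual_factors n \<union> (if even n then {0} else {}))"

lemma prod_uvec_factors:
  "(\<Prod>j\<in>uvec_factors n. h j) = (\<Prod>j\<in>nondual_factors n. h j) * (if even n then 1 else h 0)"
  by (simp add: uvec_factors_def nondual_factors_def mult.commute)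

lemma prod_wvec_factors:
  "0 < n \<Longrightarrow> (\<Prod>j\<in>wvec_factors n. h j) = (\<Prod>j\<in>dual_factors n. h j) * (if even n then h 0 else 1) * h n"
  by (simp add: wvec_factors_def dual_factors_def mult_ac)

lemma uvec_factors_cover:
  assumes "2 \<le> n"
  shows "{1..n} \<subseteq> (\<Union>j\<in>uvec_factors n. {left_coord j, right_coord n j})"
proof
  fix i assume i: "i \<in> {1..n}"
  consider "i < n" "odd (n - i)" | "i = 1" "odd n" | "1 < i" "odd (n - (i - 1))"
    using i assms by (cases "i = 1"; cases "i = n") (auto simp: Suc_diff_le)
  then show "i \<in> (\<Union>j\<in>uvec_factors n. {left_coord j, right_coord n j})"
  proof cases
    case 1
    then show ?thesis
      using i by (intro UN_I[of i]) (auto simp: uvec_factors_def nondual_factors_def left_coord_def)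
  next
    case 2
    then show ?thesis
      by (intro UN_I[of 0]) (auto simp: uvec_factors_def left_coord_def)
  next
    case 3
    then show ?thesis
      using i by (intro UN_I[of "i - 1"])
        (auto simp: uvec_factors_def nondual_factors_def right_coord_def)
  qed
qed

lemma wvec_factors_cover:
  assumes "2 \<le> n"
  shows "{1..n} \<subseteq> (\<Union>j\<in>wvec_factors n. {left_coord j, right_coord n j})"
proof
  fix i assume i: "i \<in> {1..n}"
  consider "i = n" | "i < n" "even (n - i)" | "i = 1" "even n" | "1 < i" "i < n" "even (n - (i - 1))"
    using i assms by (cases "i = 1"; cases "i = n") (auto simp: Suc_diff_le)
  then show "i \<in> (\<Union>j\<in>wvec_factors n. {left_coord j, right_coord n j})"
  proof cases
    case 1
    then show ?thesis
      using assms by (intro UN_I[of n]) (auto simp: wvec_factors_def left_coord_def)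
  next
    case 2
    then show ?thesis
      using i by (intro UN_I[of i]) (auto simp: wvec_factors_def dual_factors_def left_coord_def)
  next
    case 3
    then show ?thesis
      by (intro UN_I[of 0]) (auto simp: wvec_factors_def left_coord_def)
  next
    case 4
    then show ?thesis
      by (intro UN_I[of "i - 1"]) (auto simp: wvec_factors_def dual_factors_def right_coord_def)
  qed
qed

lemma uvec_in_l2:
  assumes n: "2 \<le> n" and \<theta>: "valid_factors n I \<theta>" and z: "z \<in> l2 (I 1)"
  shows "uvec n \<theta> z \<in> l2 (Htot n I)"
    and "l2_norm (uvec n \<theta> z)
      \<le> (\<Prod>j\<in>nondual_factors n. l2_norm (\<theta> j)) * (if even n then 1 else l2_norm z)"
proof -
  define f where "f j = (if j = 0 then diag z else \<theta> j)" for j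
  have f: "f j \<in> l2 (I (left_coord j) \<times> I (right_coord n j))" if "j \<in> uvec_factors n" for j
    using that \<theta> diag_in_l2[OF z]
    by (auto simp: f_def uvec_factors_def nondual_factors_def valid_factors_def left_coord_def
        right_coord_def split: if_splits)
  have "(\<Prod>j\<in>nondual_factors n. f j (g (left_coord j), g (right_coord n j)))
      = (\<Prod>j\<in>{j\<in>{1..<n}. odd (n - j)}. \<theta> j (g j, g (Suc j)))" for g
    by (intro prod.cong) (auto simp: nondual_factors_def f_def left_coord_def right_coord_def)
  then have "uvec n \<theta> z = (\<lambda>g. if g \<in> extensional {1..n}
      then \<Prod>j\<in>uvec_factors n. f j (g (left_coord j), g (right_coord n j)) else 0)"
    by (auto simp: fun_eq_iff uvec_def prod_uvec_factors f_def diag_def left_coord_def right_coord_def)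
  moreover have "(\<Prod>j\<in>uvec_factors n. l2_norm (f j))
      = (\<Prod>j\<in>nondual_factors n. l2_norm (\<theta> j)) * (if even n then 1 else l2_norm z)"
    unfolding prod_uvec_factors
    by (auto simp: f_def l2_norm_diag nondual_factors_def intro!: prod.cong)
  moreover have "finite (uvec_factors n)"
    by (simp add: uvec_factors_def nondual_factors_def)
  ultimately show "uvec n \<theta> z \<in> l2 (Htot n I)"
    and "l2_norm (uvec n \<theta> z)
      \<le> (\<Prod>j\<in>nondual_factors n. l2_norm (\<theta> j)) * (if even n then 1 else l2_norm z)"
    using l2_tensor_product[OF _ f uvec_factors_cover[OF n]] by simp_all
qed

lemma wvec_in_l2:
  assumes n: "2 \<le> n" and \<theta>: "valid_factors n I \<theta>" and x: "x \<in> l2 (I 1)" and y: "y \<in> l2 (I n)"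
  shows "wvec n \<theta> x y \<in> l2 (Htot n I)"
    and "l2_norm (wvec n \<theta> x y)
      \<le> (\<Prod>j\<in>dual_factors n. l2_norm (\<theta> j)) * (if even n then l2_norm x else 1) * l2_norm y"
proof -
  define f where "f j = (if j = 0 then diag x else if j = n then diag y else (\<lambda>t. cnj (\<theta> j t)))" for j
  have f: "f j \<in> l2 (I (left_coord j) \<times> I (right_coord n j))" if "j \<in> wvec_factors n" for j
    using that \<theta> diag_in_l2[OF x] diag_in_l2[OF y] n
    by (auto simp: f_def wvec_factors_def dual_factors_def valid_factors_def left_coord_def
        right_coord_def intro: l2_cnj split: if_splits)
  have "(\<Prod>j\<in>dual_factors n. f j (g (left_coord j), g (right_coord n j)))
      = (\<Prod>j\<in>{j\<in>{1..<n}. even (n - j)}. cnj (\<theta> j (g j, g (Suc j))))" for g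
    by (intro prod.cong) (auto simp: dual_factors_def f_def left_coord_def right_coord_def)
  then have "wvec n \<theta> x y = (\<lambda>g. if g \<in> extensional {1..n}
      then \<Prod>j\<in>wvec_factors n. f j (g (left_coord j), g (right_coord n j)) else 0)"
    using n by (auto simp: fun_eq_iff wvec_def prod_wvec_factors f_def diag_def left_coord_def
        right_coord_def)
  moreover have "(\<Prod>j\<in>wvec_factors n. l2_norm (f j))
      = (\<Prod>j\<in>dual_factors n. l2_norm (\<theta> j)) * (if even n then l2_norm x else 1) * l2_norm y"
    unfolding prod_wvec_factors[OF order.strict_trans2[OF pos2 n]]
    using n by (auto simp: f_def l2_norm_diag l2_norm_cnj dual_factors_def intro!: prod.cong)
  moreover have "finite (wvec_factors n)"
    by (simp add: wvec_factors_def dual_factors_def)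
  ultimately show "wvec n \<theta> x y \<in> l2 (Htot n I)"
    and "l2_norm (wvec n \<theta> x y)
      \<le> (\<Prod>j\<in>dual_factors n. l2_norm (\<theta> j)) * (if even n then l2_norm x else 1) * l2_norm y"
    using l2_tensor_product[OF _ f wvec_factors_cover[OF n]] by simp_all
qed

section \<open>The operator of an elementary tensor\<close>

lemma prod_nondual_dual_factors:
  "(\<Prod>j\<in>nondual_factors n. h j) * (\<Prod>j\<in>dual_factors n. h j) = (\<Prod>j\<in>{1..<n}. h j)"
proof -
  have "{1..<n} = nondual_factors n \<union> dual_factors n"
    by (auto simp: nondual_factors_def dual_factors_def)
  then show ?thesis
    by (simp only:)
      (rule prod.union_disjoint[symmetric]; auto simp: nondual_factors_def dual_factors_def)
qed

lemma wvec_sum_last: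
  "wvec n \<theta> x (\<lambda>s. \<Sum>b\<in>F. c b * w b s) = (\<lambda>h. \<Sum>b\<in>F. c b * wvec n \<theta> x (w b) h)"
  by (auto simp: fun_eq_iff wvec_def sum_distrib_left sum_distrib_right mult_ac)

lemma wvec_odd: "odd n \<Longrightarrow> wvec n \<theta> x y = wvec n \<theta> x' y"
  by (simp add: wvec_def fun_eq_iff)

lemma Selem_eq:
  "Selem n I \<phi> \<theta> z b
    = (if b \<in> I n then l2_inner (\<phi> (uvec n \<theta> z)) (wvec n \<theta> (cnj \<circ> z) (delta b)) else 0)"
  by (cases "even n") (simp_all add: Selem_def wvec_odd[of n \<theta> z _ "cnj \<circ> z"])

lemma l2_inner_wvec_Selem:
  assumes n: "2 \<le> n" and \<phi>: "bounded_op (Htot n I) (Htot n I) \<phi>"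
    and \<theta>: "valid_factors n I \<theta>" and z: "z \<in> l2 (I 1)" and F: "finite F" "F \<subseteq> I n"
  defines "c \<equiv> Selem n I \<phi> \<theta> z"
  shows "l2_inner (\<phi> (uvec n \<theta> z)) (wvec n \<theta> (cnj \<circ> z) (\<lambda>s. if s \<in> F then c s else 0))
    = of_real ((L2_set (\<lambda>b. cmod (c b)) F)^2)"
proof -
  have x: "cnj \<circ> z \<in> l2 (I 1)"
    using l2_cnj[OF z] by (simp add: o_def)
  have w: "wvec n \<theta> (cnj \<circ> z) (delta b) \<in> l2 (Htot n I)" if "b \<in> F" for b
    using wvec_in_l2(1)[OF n \<theta> x delta_in_l2] that F(2) by blast
  have "c b * delta b s = (if s = b then c b else 0)" for b s
    by (simp add: delta_def)
  then have restr: "(\<lambda>s. if s \<in> F then c s else 0) = (\<lambda>s. \<Sum>b\<in>F. c b * delta b s)"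
    using F(1) by (simp add: fun_eq_iff sum.delta')
  have "l2_inner (\<phi> (uvec n \<theta> z)) (wvec n \<theta> (cnj \<circ> z) (\<lambda>s. if s \<in> F then c s else 0))
      = (\<Sum>b\<in>F. cnj (c b) * l2_inner (\<phi> (uvec n \<theta> z)) (wvec n \<theta> (cnj \<circ> z) (delta b)))"
    unfolding restr wvec_sum_last
    by (rule l2_inner_sum_right[OF F(1) bounded_op_maps_l2[OF \<phi> uvec_in_l2(1)[OF n \<theta> z]] w])
  also have "\<dots> = (\<Sum>b\<in>F. cnj (c b) * c b)"
    using F(2) by (intro sum.cong) (auto simp: c_def Selem_eq)
  also have "\<dots> = (\<Sum>b\<in>F. of_real ((cmod (c b))^2))"
    by (intro sum.cong refl) (metis complex_norm_square mult.commute)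
  also have "\<dots> = of_real ((L2_set (\<lambda>b. cmod (c b)) F)^2)"
    unfolding of_real_sum[symmetric] by (simp add: L2_set_def sum_nonneg)
  finally show ?thesis .
qed

lemma L2_set_Selem_le_on_range:
  assumes n: "2 \<le> n" and \<phi>: "bounded_op (Htot n I) (Htot n I) \<phi>"
    and \<theta>: "valid_factors n I \<theta>" and z: "z \<in> l2 (I 1)" and F: "finite F" "F \<subseteq> I n"
  shows "L2_set (\<lambda>b. cmod (Selem n I \<phi> \<theta> z b)) F
    \<le> op_norm (Htot n I) \<phi> * (\<Prod>j\<in>{1..<n}. l2_norm (\<theta> j)) * l2_norm z"
    (is "?L \<le> ?K")
proof -
  define u where "u = uvec n \<theta> z"
  define y where "y = (\<lambda>s. if s \<in> F then Selem n I \<phi> \<theta> z s else 0)"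
  define W where "W = wvec n \<theta> (cnj \<circ> z) y"
  have x: "cnj \<circ> z \<in> l2 (I 1)" and "l2_norm (cnj \<circ> z) = l2_norm z"
    using l2_cnj[OF z] l2_norm_cnj[of z] by (simp_all add: o_def)
  have y: "y \<in> l2 (I n)"
    unfolding y_def by (rule l2_restrict_finite(1)[OF F])
  have "l2_norm y = ?L"
    unfolding y_def by (rule l2_restrict_finite(2)[OF F])
  have u: "u \<in> l2 (Htot n I)" and W: "W \<in> l2 (Htot n I)"
    using uvec_in_l2(1)[OF n \<theta> z] wvec_in_l2(1)[OF n \<theta> x y] by (simp_all add: u_def W_def)
  define Bu where "Bu = (\<Prod>j\<in>nondual_factors n. l2_norm (\<theta> j)) * (if even n then 1 else l2_norm z)"
  define BW where "BW = (\<Prod>j\<in>dual_factors n. l2_norm (\<theta> j))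
    * (if even n then l2_norm (cnj \<circ> z) else 1) * l2_norm y"
  have "?L^2 = cmod (l2_inner (\<phi> u) W)"
    unfolding u_def W_def y_def
    using l2_inner_wvec_Selem[OF n \<phi> \<theta> z F] by (simp add: norm_power)
  also have "\<dots> \<le> l2_norm (\<phi> u) * l2_norm W"
    by (rule l2_inner_Cauchy_Schwarz[OF bounded_op_maps_l2[OF \<phi> u] W])
  also have "\<dots> \<le> op_norm (Htot n I) \<phi> * l2_norm u * l2_norm W"
    by (intro mult_right_mono op_norm_bound[OF \<phi> u] l2_norm_nonneg)
  also have "\<dots> \<le> op_norm (Htot n I) \<phi> * Bu * BW"
    using uvec_in_l2(2)[OF n \<theta> z] wvec_in_l2(2)[OF n \<theta> x y] op_norm_nonneg[OF \<phi>]
      l2_norm_nonneg[of u] l2_norm_nonneg[of W]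
    by (intro mult_mono mult_left_mono) (auto simp: u_def W_def Bu_def BW_def)
  also have "\<dots> = ?K * ?L"
    using \<open>l2_norm (cnj \<circ> z) = l2_norm z\<close> \<open>l2_norm y = ?L\<close>
      prod_nondual_dual_factors[of "\<lambda>j. l2_norm (\<theta> j)" n]
    by (simp add: Bu_def BW_def mult_ac)
  finally have "?L * ?L \<le> ?K * ?L"
    by (simp add: power2_eq_square)
  moreover have "0 \<le> ?L" "0 \<le> ?K"
    using op_norm_nonneg[OF \<phi>] by (simp_all add: prod_nonneg l2_norm_nonneg)
  ultimately show "?L \<le> ?K"
    by (cases "?L = 0") (auto intro: mult_right_le_imp_le)
qed

lemma L2_set_Selem_le:
  assumes n: "2 \<le> n" and \<phi>: "bounded_op (Htot n I) (Htot n I) \<phi>"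
    and \<theta>: "valid_factors n I \<theta>" and z: "z \<in> l2 (I 1)"
  shows "L2_set (\<lambda>b. cmod (Selem n I \<phi> \<theta> z b)) F
    \<le> op_norm (Htot n I) \<phi> * (\<Prod>j\<in>{1..<n}. l2_norm (\<theta> j)) * l2_norm z"
proof (cases "finite F")
  case False
  then show ?thesis
    using op_norm_nonneg[OF \<phi>] by (simp add: prod_nonneg l2_norm_nonneg)
next
  case True
  have "L2_set (\<lambda>b. cmod (Selem n I \<phi> \<theta> z b)) F = L2_set (\<lambda>b. cmod (Selem n I \<phi> \<theta> z b)) (F \<inter> I n)"
    unfolding L2_set_def using True
    by (intro arg_cong[where f = sqrt] sum.mono_neutral_right) (auto simp: Selem_def)
  then show ?thesis
    using L2_set_Selem_le_on_range[OF n \<phi> \<theta> z] True by simp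
qed

section \<open>Independence of the representation\<close>

lemma bilinear_on_l2_pairing:
  assumes "bounded_op J K \<phi>"
  shows "bilinear_on (l2 J) (l2 K) (\<lambda>u v. infsum (\<lambda>h. \<phi> u h * v h) UNIV)"
proof -
  have summable: "(\<lambda>h. \<phi> u h * v h) summable_on UNIV" if "u \<in> l2 J" "v \<in> l2 K" for u v
    using l2_summable_mult[OF bounded_op_maps_l2[OF assms that(1)] that(2)] .
  have "infsum (\<lambda>h. \<phi> (\<lambda>x. a * u1 x + b * u2 x) h * v h) UNIV
      = a * infsum (\<lambda>h. \<phi> u1 h * v h) UNIV + b * infsum (\<lambda>h. \<phi> u2 h * v h) UNIV"
    if "u1 \<in> l2 J" "u2 \<in> l2 J" "v \<in> l2 K" for u1 u2 v a b
    using that summable[of u1 v] summable[of u2 v]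
    by (simp add: bounded_op_lincomb[OF assms] distrib_right mult.assoc infsum_add
        summable_on_cmult_right infsum_cmult_right')
  moreover have "infsum (\<lambda>h. \<phi> u h * (a * v1 h + b * v2 h)) UNIV
      = a * infsum (\<lambda>h. \<phi> u h * v1 h) UNIV + b * infsum (\<lambda>h. \<phi> u h * v2 h) UNIV"
    if "u \<in> l2 J" "v1 \<in> l2 K" "v2 \<in> l2 K" for u v1 v2 a b
    using that summable[of u v1] summable[of u v2]
    by (simp add: distrib_left mult.left_commute infsum_add summable_on_cmult_right infsum_cmult_right')
  ultimately show ?thesis
    by (simp add: bilinear_on_def)
qed

text \<open>In \<open>u \<otimes> cnj w\<close> the non-dual factors of an elementary tensor are evaluated at the
  coordinates \<open>g\<close> of the argument of \<open>\<phi>\<close> and the dual ones at the coordinates \<open>h\<close> of the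
  test vector, so the product is linear in the tensor evaluated at the interleaved pairs.\<close>
definition interleave :: "nat \<Rightarrow> (nat \<Rightarrow> 'a) \<Rightarrow> (nat \<Rightarrow> 'a) \<Rightarrow> nat \<Rightarrow> 'a \<times> 'a" where
  "interleave n g h = (\<lambda>j. if odd (n - j) then (g j, g (Suc j)) else (h j, h (Suc j)))"

lemma uvec_mult_cnj_wvec:
  "uvec n \<theta> z g * cnj (wvec n \<theta> (cnj \<circ> z) (delta b) h)
    = (if g \<in> extensional {1..n} \<and> h \<in> extensional {1..n}
       then gtensor n \<theta> (interleave n g h) * (if even n then z (h 1) else z (g 1)) * cnj (delta b (h n))
       else 0)"
proof -
  have "gtensor n \<theta> (interleave n g h)
      = (\<Prod>j\<in>{1..<n}. if odd (n - j) then \<theta> j (g j, g (Suc j)) else \<theta> j (h j, h (Suc j)))"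
    unfolding gtensor_def interleave_def by (intro prod.cong) auto
  also have "\<dots> = (\<Prod>j\<in>{1..<n} \<inter> {j. odd (n - j)}. \<theta> j (g j, g (Suc j)))
      * (\<Prod>j\<in>{1..<n} \<inter> - {j. odd (n - j)}. \<theta> j (h j, h (Suc j)))"
    by (rule prod.If_cases) simp
  also have "{1..<n} \<inter> {j. odd (n - j)} = {j\<in>{1..<n}. odd (n - j)}"
    by auto
  also have "{1..<n} \<inter> - {j. odd (n - j)} = {j\<in>{1..<n}. even (n - j)}"
    by auto
  finally show ?thesis
    by (auto simp: uvec_def wvec_def mult_ac)
qed

lemma sum_uvec_mult_cnj_wvec:
  assumes "(m, \<Theta>) \<in> reps n I \<zeta>"
  shows "(\<Sum>k<m. uvec n (\<Theta> k) z g * cnj (wvec n (\<Theta> k) (cnj \<circ> z) (delta b) h))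
    = (if g \<in> extensional {1..n} \<and> h \<in> extensional {1..n}
       then \<zeta> (interleave n g h) * (if even n then z (h 1) else z (g 1)) * cnj (delta b (h n))
       else 0)"
proof (cases "g \<in> extensional {1..n} \<and> h \<in> extensional {1..n}")
  case True
  then show ?thesis
    using assms by (simp add: uvec_mult_cnj_wvec reps_def sum_distrib_right)
next
  case False
  then show ?thesis
    by (simp only: uvec_mult_cnj_wvec if_not_P[OF False] if_False sum.neutral_const)
qed

lemma sum_Selem_eq:
  assumes n: "2 \<le> n" and \<phi>: "bounded_op (Htot n I) (Htot n I) \<phi>"
    and r: "(m, \<Theta>) \<in> reps n I \<zeta>" and r': "(m', \<Theta>') \<in> reps n I \<zeta>" and z: "z \<in> l2 (I 1)"
  shows "(\<Sum>k<m. Selem n I \<phi> (\<Theta> k) z b) = (\<Sum>k<m'. Selem n I \<phi> (\<Theta>' k) z b)"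
proof (cases "b \<in> I n")
  case False
  then show ?thesis
    by (simp add: Selem_def)
next
  case True
  let ?H = "l2 (Htot n I)"
  define B where "B u v = infsum (\<lambda>h. \<phi> u h * v h) UNIV" for u v
  define w where "w \<theta> h = cnj (wvec n \<theta> (cnj \<circ> z) (delta b) h)" for \<theta> h
  have Selem: "Selem n I \<phi> \<theta> z b = B (uvec n \<theta> z) (w \<theta>)" for \<theta>
    using True by (simp add: Selem_eq l2_inner_def B_def w_def)
  have x: "cnj \<circ> z \<in> l2 (I 1)"
    using l2_cnj[OF z] by (simp add: o_def)
  have in_H: "uvec n \<theta> z \<in> ?H" "w \<theta> \<in> ?H" if "valid_factors n I \<theta>" for \<theta>
    unfolding w_def
    by (rule uvec_in_l2(1)[OF n that z],
        rule l2_cnj[OF wvec_in_l2(1)[OF n that x delta_in_l2[OF True]]])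
  have B: "bilinear_on ?H ?H B"
    unfolding B_def by (rule bilinear_on_l2_pairing[OF \<phi>])
  have vf: "valid_factors n I (\<Theta> k)" if "k < m" for k
    using r that by (simp add: reps_def)
  have vf': "valid_factors n I (\<Theta>' k)" if "k < m'" for k
    using r' that by (simp add: reps_def)
  have eq: "(\<Sum>k<m. uvec n (\<Theta> k) z g * w (\<Theta> k) h) = (\<Sum>k<m'. uvec n (\<Theta>' k) z g * w (\<Theta>' k) h)"
    for g h
    unfolding w_def sum_uvec_mult_cnj_wvec[OF r] sum_uvec_mult_cnj_wvec[OF r'] ..
  show ?thesis
    unfolding Selem
    by (rule bilinear_on_sum_eq[OF lin_closed_l2 lin_closed_l2 B finite_lessThan finite_lessThan
          _ _ _ _ eq])
      (use in_H vf vf' in simp_all)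
qed

lemma S_phi_eq:
  assumes n: "2 \<le> n" and \<phi>: "bounded_op (Htot n I) (Htot n I) \<phi>"
    and r: "(m, \<Theta>) \<in> reps n I \<zeta>" and z: "z \<in> l2 (I 1)"
  shows "S_phi n I \<phi> \<zeta> z = (\<lambda>b. \<Sum>k<m. Selem n I \<phi> (\<Theta> k) z b)"
proof -
  have "\<exists>T. \<exists>m \<Theta>. (m, \<Theta>) \<in> reps n I \<zeta> \<and> T = (\<lambda>z b. \<Sum>k<m. Selem n I \<phi> (\<Theta> k) z b)"
    using r by blast
  then obtain m0 \<Theta>0 where r0: "(m0, \<Theta>0) \<in> reps n I \<zeta>"
    and "S_phi n I \<phi> \<zeta> = (\<lambda>z b. \<Sum>k<m0. Selem n I \<phi> (\<Theta>0 k) z b)"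
    unfolding S_phi_def by (rule someI_ex[THEN exE]) blast
  then show ?thesis
    using sum_Selem_eq[OF n \<phi> r0 r z] by simp
qed

lemma L2_set_sum_le:
  assumes "finite K"
  shows "L2_set (\<lambda>b. \<Sum>k\<in>K. f k b) F \<le> (\<Sum>k\<in>K. L2_set (f k) F)"
  using assms
proof (induction K rule: finite_induct)
  case (insert k K)
  have "L2_set (\<lambda>b. \<Sum>k\<in>insert k K. f k b) F = L2_set (\<lambda>b. f k b + (\<Sum>k\<in>K. f k b)) F"
    using insert.hyps by simp
  also have "\<dots> \<le> L2_set (f k) F + L2_set (\<lambda>b. \<Sum>k\<in>K. f k b) F"
    by (rule L2_set_triangle_ineq)
  also have "\<dots> \<le> (\<Sum>k\<in>insert k K. L2_set (f k) F)"
    using insert by simp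
  finally show ?case .
qed (simp add: L2_set_0')

lemma op_norm_S_phi_le:
  assumes n: "2 \<le> n" and \<phi>: "bounded_op (Htot n I) (Htot n I) \<phi>" and r: "(m, \<Theta>) \<in> reps n I \<zeta>"
  shows "op_norm (I 1) (S_phi n I \<phi> \<zeta>)
    \<le> op_norm (Htot n I) \<phi> * (\<Sum>k<m. \<Prod>j\<in>{1..<n}. l2_norm (\<Theta> k j))"
    (is "_ \<le> ?M * (\<Sum>k<m. ?P k)")
proof (rule op_norm_le)
  fix z assume z: "z \<in> l2 (I 1)" "l2_norm z \<le> 1"
  have M: "0 \<le> ?M" and P: "0 \<le> ?P k" for k
    using op_norm_nonneg[OF \<phi>] by (simp_all add: prod_nonneg l2_norm_nonneg)
  have "L2_set (\<lambda>b. cmod (S_phi n I \<phi> \<zeta> z b)) F \<le> ?M * (\<Sum>k<m. ?P k)" for F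
  proof -
    have "L2_set (\<lambda>b. cmod (S_phi n I \<phi> \<zeta> z b)) F
        \<le> L2_set (\<lambda>b. \<Sum>k<m. cmod (Selem n I \<phi> (\<Theta> k) z b)) F"
      by (intro L2_set_mono) (simp_all add: S_phi_eq[OF n \<phi> r z(1)] norm_sum)
    also have "\<dots> \<le> (\<Sum>k<m. L2_set (\<lambda>b. cmod (Selem n I \<phi> (\<Theta> k) z b)) F)"
      by (rule L2_set_sum_le) simp
    also have "\<dots> \<le> (\<Sum>k<m. ?M * ?P k * l2_norm z)"
      using r by (intro sum_mono L2_set_Selem_le[OF n \<phi> _ z(1)]) (simp add: reps_def)
    also have "\<dots> \<le> (\<Sum>k<m. ?M * ?P k)"
      using M P z(2) by (intro sum_mono mult_left_le) simp_all
    finally show ?thesis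
      by (simp add: sum_distrib_left)
  qed
  then show "l2_norm (S_phi n I \<phi> \<zeta> z) \<le> ?M * (\<Sum>k<m. ?P k)"
    using M P by (intro l2_norm_le_of_bounded_L2_set mult_nonneg_nonneg sum_nonneg) auto
qed

lemma le_mult_cInf:
  fixes a M :: real
  assumes "Y \<noteq> {}" "0 \<le> M" "\<And>y. y \<in> Y \<Longrightarrow> a \<le> M * y"
  shows "a \<le> M * Inf Y"
proof (cases "M = 0")
  case True
  then show ?thesis
    using assms by auto
next
  case False
  then have "a / M \<le> Inf Y"
    using assms by (intro cInf_greatest) (auto simp: divide_le_eq mult.commute)
  then show ?thesis
    using False assms(2) by (simp add: divide_le_eq mult.commute)
qed

theorem mainTheorem5:
  fixes n :: nat and I :: "nat \<Rightarrow> 'a set"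
    and \<phi> :: "((nat \<Rightarrow> 'a) \<Rightarrow> complex) \<Rightarrow> ((nat \<Rightarrow> 'a) \<Rightarrow> complex)"
    and \<zeta> :: "(nat \<Rightarrow> 'a \<times> 'a) \<Rightarrow> complex"
  assumes "n \<ge> 2"
    and "bounded_op (Htot n I) (Htot n I) \<phi>"
    and "\<zeta> \<in> Gamma n I"
  shows "op_norm (I 1) (S_phi n I \<phi> \<zeta>) \<le> op_norm (Htot n I) \<phi> * proj_norm n I \<zeta>"
  unfolding proj_norm_def
proof (rule le_mult_cInf)
  show "{\<Sum>k<m. \<Prod>j\<in>{1..<n}. l2_norm (\<Theta> k j) | m \<Theta>. (m, \<Theta>) \<in> reps n I \<zeta>} \<noteq> {}"
    using assms(3) by (auto simp: Gamma_def)
  show "0 \<le> op_norm (Htot n I) \<phi>"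
    by (rule op_norm_nonneg[OF assms(2)])
  show "op_norm (I 1) (S_phi n I \<phi> \<zeta>) \<le> op_norm (Htot n I) \<phi> * y"
    if "y \<in> {\<Sum>k<m. \<Prod>j\<in>{1..<n}. l2_norm (\<Theta> k j) | m \<Theta>. (m, \<Theta>) \<in> reps n I \<zeta>}" for y
    using that op_norm_S_phi_le[OF assms(1,2)] by blast
qed

end
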